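(* Let $n\ge 2d\ge 2$ be integers. There is a set $\mathcal{M}_d$ of $d$-matchings on $[n]$ of size $N:=|\mathcal{M}_d|\ge \binom{n}{d}/(4\cdot 2^d)$ and a set $\mathcal{S}_d$ of $d$-subsets of $[n]$ such that for every $S\in\mathcal{S}_d$ there is a unique matching $M\in\mathcal{M}_d$ which fully crosses $S$, and for every $M\in\mathcal{M}_d$ there is at least one $S\in\mathcal{S}_d$ which $M$ fully crosses. Moreover, for every $S\in\mathcal{S}_d$ there is a unique $M\in\mathcal{M}_d$ with $q_M(\mathbf{1}_S)\neq 0$, so the span of $\{q_M:M\in\mathcal{M}_d\}$ has dimension exactly $N$.
   Context: A $d$-matching on $[n]=\{1,\dots,n\}$ is a set of $d$ pairwise disjoint $2$-element subsets (edges) of $[n]$. For such $M$, $q_M(x_1,\dots,x_n)=\prod_{\{i,j\}\in M,\, i<j}(x_i-x_j)$. A $d$-matching $M$ fully crosses a $d$-subset $S\subseteq[n]$ if every edge of $M$ has exactly one endpoint in $S$. $\mathbf{1}_S\in\mathbb{R}^n$ is the indicator vector of $S$. *)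

theory Defs
  imports Complex_Main "HOL-Library.Function_Algebras"
begin

definition is_matching :: "nat \<Rightarrow> nat \<Rightarrow> nat set set \<Rightarrow> bool" where
  "is_matching n d M \<longleftrightarrow>
     (\<forall>e\<in>M. e \<subseteq> {1..n} \<and> card e = 2) \<and>
     (\<forall>e\<in>M. \<forall>e'\<in>M. e \<noteq> e' \<longrightarrow> e \<inter> e' = {}) \<and>
     finite M \<and> card M = d"

text \<open>q_M(x) = product over edges {i,j}, i<j, of (x_i - x_j); points of R^n are
  functions nat => real (only coordinates 1..n matter).\<close>
definition qM :: "nat set set \<Rightarrow> (nat \<Rightarrow> real) \<Rightarrow> real" where
  "qM M x = (\<Prod>e\<in>M. x (Min e) - x (Max e))"

definition fully_crosses :: "nat set set \<Rightarrow> nat set \<Rightarrow> bool" where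
  "fully_crosses M S \<longleftrightarrow> (\<forall>e\<in>M. card (e \<inter> S) = 1)"

definition indic :: "nat set \<Rightarrow> nat \<Rightarrow> real" where
  "indic S = (\<lambda>i. if i \<in> S then 1 else 0)"

definition fscale :: "real \<Rightarrow> ((nat \<Rightarrow> real) \<Rightarrow> real) \<Rightarrow> ((nat \<Rightarrow> real) \<Rightarrow> real)" where
  "fscale r f = (\<lambda>x. r * f x)"

end

theory Submission
  imports Defs
begin

text \<open>Split [n] into A = {1..d} and B = {d+1..n} and pick j \<le> d maximising C(n-d, j);
  by Vandermonde, C(n, d) \<le> 2^d C(n-d, j). For every j-subset X of B choose an
  injection g_X of A into B that sends {d-j+1..d} onto X and {1..d-j} into B - X, and let
  M_X = {{a, g_X a} | a \<in> A} and S_X = {1..d-j} \<union> X. Then M_Y fully crosses S_X exactly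
  when Y = X, and on indicator vectors q_M vanishes unless M fully crosses the set, so the
  points 1_{S_X} are biorthogonal to the polynomials q_{M_X}; these are therefore linearly
  independent.\<close>

lemma card_doubleton_Int_eq_1_iff:
  assumes "a \<noteq> b"
  shows "card ({a, b} \<inter> S) = 1 \<longleftrightarrow> (a \<in> S \<longleftrightarrow> b \<notin> S)"
  using assms by (cases "a \<in> S"; cases "b \<in> S") (auto simp: Int_insert_left)

lemma qM_indic_neq_zero_iff:
  assumes "finite M" and "\<And>e. e \<in> M \<Longrightarrow> card e = 2"
  shows "qM M (indic S) \<noteq> 0 \<longleftrightarrow> fully_crosses M S"
proof -
  have "indic S (Min e) - indic S (Max e) \<noteq> 0 \<longleftrightarrow> card (e \<inter> S) = 1" if e: "e \<in> M" for e
  proof -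
    obtain a b where "e = {a, b}" "a < b"
      using assms(2)[OF e] by (auto simp: card_2_iff) (metis insert_commute linorder_neqE_nat)
    then show ?thesis
      by (auto simp: indic_def card_doubleton_Int_eq_1_iff)
  qed
  then show ?thesis
    using assms(1) by (auto simp: qM_def fully_crosses_def)
qed

lemma vector_space_fscale: "vector_space fscale"
  by unfold_locales (auto simp: fscale_def fun_eq_iff algebra_simps)

lemma sum_fun_apply:
  fixes h :: "'a \<Rightarrow> 'b \<Rightarrow> real"
  shows "(\<Sum>x\<in>A. h x) p = (\<Sum>x\<in>A. h x p)"
  by (induction A rule: infinite_finite_induct) auto

lemma dim_span_biorthogonal:
  fixes q :: "'i \<Rightarrow> (nat \<Rightarrow> real) \<Rightarrow> real" and p :: "'i \<Rightarrow> nat \<Rightarrow> real"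
  assumes "finite I" and biorth: "\<And>i j. i \<in> I \<Longrightarrow> j \<in> I \<Longrightarrow> q i (p j) \<noteq> 0 \<longleftrightarrow> i = j"
  shows "vector_space.dim fscale (module.span fscale (q ` I)) = card I"
proof -
  interpret vector_space fscale
    by (rule vector_space_fscale)
  have "u (q i) = 0"
    if "finite t" "t \<subseteq> q ` I" "(\<Sum>v\<in>t. fscale (u v) v) = 0" "i \<in> I" "q i \<in> t" for t u i
  proof -
    have "0 = (\<Sum>v\<in>t. fscale (u v) v) (p i)"
      using that(3) by simp
    also have "\<dots> = u (q i) * q i (p i) + (\<Sum>v\<in>t - {q i}. u v * v (p i))"
      using that(1,5) by (simp add: sum_fun_apply fscale_def sum.remove)
    also have "(\<Sum>v\<in>t - {q i}. u v * v (p i)) = 0"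
      using that(2,4) biorth by (intro sum.neutral) fastforce
    finally show "u (q i) = 0"
      using biorth[OF that(4) that(4)] by simp
  qed
  then have "independent (q ` I)"
    unfolding dependent_explicit by blast
  moreover have "inj_on q I"
    using biorth by (metis inj_onI)
  ultimately show ?thesis
    by (metis dim_span_eq_card_independent card_image)
qed

lemma ex1_in_image_if_diagonal:
  assumes "\<And>i j. i \<in> I \<Longrightarrow> j \<in> I \<Longrightarrow> P (f i) (g j) \<longleftrightarrow> i = j" and "y \<in> g ` I"
  shows "\<exists>!x. x \<in> f ` I \<and> P x y"
  using assms by blast

definition pair_edges :: "(nat \<Rightarrow> nat) \<Rightarrow> nat set \<Rightarrow> nat set set" where
  "pair_edges g A = (\<lambda>a. {a, g a}) ` A"

lemma is_matching_pair_edges: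
  assumes "inj_on g A" and "A \<inter> g ` A = {}" and "A \<union> g ` A \<subseteq> {1..n}" and "card A = d"
  shows "is_matching n d (pair_edges g A)"
proof -
  have outside: "a \<noteq> g b" if "a \<in> A" "b \<in> A" for a b
    using that assms(2) by (metis IntI empty_iff image_eqI)
  have "A \<subseteq> {1..n}"
    using assms(3) by simp
  then have finite: "finite ((\<lambda>a. {a, g a}) ` A)"
    using finite_subset[OF _ finite_atLeastAtMost] by blast
  have "inj_on (\<lambda>a. {a, g a}) A"
  proof (rule inj_onI)
    fix a b assume "a \<in> A" "b \<in> A" "{a, g a} = {b, g b}"
    then show "a = b"
      using outside by (auto simp: doubleton_eq_iff)
  qed
  then have card: "card ((\<lambda>a. {a, g a}) ` A) = d"
    using assms(4) by (simp add: card_image)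
  have edge: "{a, g a} \<subseteq> {1..n} \<and> card {a, g a} = 2" if "a \<in> A" for a
  proof -
    have "a \<in> {1..n}" "g a \<in> {1..n}"
      using assms(3) that by (auto simp del: atLeastAtMost_iff)
    then show ?thesis
      using outside[OF that that] by auto
  qed
  have disjoint: "{a, g a} \<inter> {b, g b} = {}" if "a \<in> A" "b \<in> A" "a \<noteq> b" for a b
  proof -
    have "g a \<noteq> g b"
      using that assms(1) by (auto dest: inj_onD)
    then show ?thesis
      using that outside by auto
  qed
  show ?thesis
    unfolding is_matching_def pair_edges_def
    using finite card edge disjoint by fastforce
qed

lemma fully_crosses_pair_edges_iff:
  assumes "\<And>a. a \<in> A \<Longrightarrow> g a \<noteq> a"
  shows "fully_crosses (pair_edges g A) S \<longleftrightarrow> (\<forall>a\<in>A. a \<in> S \<longleftrightarrow> g a \<notin> S)"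
proof -
  have "fully_crosses (pair_edges g A) S \<longleftrightarrow> (\<forall>a\<in>A. card ({a, g a} \<inter> S) = 1)"
    by (simp add: fully_crosses_def pair_edges_def)
  also have "\<dots> \<longleftrightarrow> (\<forall>a\<in>A. a \<in> S \<longleftrightarrow> g a \<notin> S)"
    using assms by (intro ball_cong refl card_doubleton_Int_eq_1_iff) metis
  finally show ?thesis .
qed

lemma exists_pairing:
  assumes "finite B" and "X \<subseteq> B" and "L \<inter> R = {}" and "finite L" and "finite R"
    and "card R = card X" and "card L \<le> card (B - X)"
  obtains g where "inj_on g (L \<union> R)" and "g ` L \<subseteq> B - X" and "g ` R = X"
proof -
  obtain Y where Y: "Y \<subseteq> B - X" "card Y = card L"
    using assms(7) obtain_subset_with_card_n by metis
  have "finite X" "finite Y"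
    using assms(1,2) Y(1) finite_subset by blast+
  obtain gL where gL: "bij_betw gL L Y"
    using finite_same_card_bij[OF assms(4) \<open>finite Y\<close>] Y(2) by auto
  obtain gR where gR: "bij_betw gR R X"
    using finite_same_card_bij[OF assms(5) \<open>finite X\<close>] assms(6) by auto
  define g where "g a = (if a \<in> L then gL a else gR a)" for a
  have "bij_betw g L Y"
    by (rule bij_betw_cong[THEN iffD2, OF _ gL]) (simp add: g_def)
  moreover have "bij_betw g R X"
    by (rule bij_betw_cong[THEN iffD2, OF _ gR]) (use assms(3) in \<open>auto simp: g_def\<close>)
  moreover have "Y \<inter> X = {}"
    using Y(1) by auto
  ultimately have "bij_betw g (L \<union> R) (Y \<union> X)"
    by (rule bij_betw_combine)
  with \<open>bij_betw g L Y\<close> \<open>bij_betw g R X\<close> Y(1) show thesis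
    by (intro that) (auto simp: bij_betw_def)
qed

lemma fully_crosses_pair_edges_eq_iff:
  assumes "L \<inter> R = {}" and "(L \<union> R) \<inter> B = {}" and "X \<subseteq> B" and "Y \<subseteq> B" and "finite Y"
    and "g ` L \<subseteq> B - X" and "g ` R = X" and "card X = card Y"
  shows "fully_crosses (pair_edges g (L \<union> R)) (L \<union> Y) \<longleftrightarrow> X = Y"
proof -
  have in_B: "g a \<in> B" and not_in_B: "a \<notin> B" if "a \<in> L \<union> R" for a
    using that assms(2,3,6,7) by auto
  then have "g a \<noteq> a" if "a \<in> L \<union> R" for a
    using that by metis
  then have "fully_crosses (pair_edges g (L \<union> R)) (L \<union> Y) \<longleftrightarrow>
      (\<forall>a\<in>L \<union> R. a \<in> L \<union> Y \<longleftrightarrow> g a \<notin> L \<union> Y)"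
    by (rule fully_crosses_pair_edges_iff)
  also have "\<dots> \<longleftrightarrow> (\<forall>a\<in>L \<union> R. a \<in> L \<longleftrightarrow> g a \<notin> Y)"
  proof (rule ball_cong[OF refl])
    fix a assume "a \<in> L \<union> R"
    moreover have "a \<notin> Y" "g a \<notin> L"
      using in_B[OF \<open>a \<in> L \<union> R\<close>] not_in_B[OF \<open>a \<in> L \<union> R\<close>] assms(2,4) by auto
    ultimately show "(a \<in> L \<union> Y \<longleftrightarrow> g a \<notin> L \<union> Y) \<longleftrightarrow> (a \<in> L \<longleftrightarrow> g a \<notin> Y)"
      by auto
  qed
  also have "\<dots> \<longleftrightarrow> (\<forall>a\<in>L. g a \<notin> Y) \<and> (\<forall>a\<in>R. g a \<in> Y)"
    using assms(1) by auto
  also have "\<dots> \<longleftrightarrow> X = Y"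
  proof
    assume "(\<forall>a\<in>L. g a \<notin> Y) \<and> (\<forall>a\<in>R. g a \<in> Y)"
    then have "X \<subseteq> Y"
      using assms(7) by auto
    then show "X = Y"
      using card_subset_eq[OF assms(5)] assms(8) by blast
  next
    assume "X = Y"
    then show "(\<forall>a\<in>L. g a \<notin> Y) \<and> (\<forall>a\<in>R. g a \<in> Y)"
      using assms(6,7) by auto
  qed
  finally show ?thesis .
qed

lemma choose_le_two_pow_times_choose:
  assumes "d \<le> n"
  obtains j where "j \<le> d" and "n choose d \<le> 2 ^ d * ((n - d) choose j)"
proof -
  define m where "m = Max ((\<lambda>i. (n - d) choose i) ` {..d})"
  have "m \<in> (\<lambda>i. (n - d) choose i) ` {..d}"
    unfolding m_def by (rule Max_in) auto
  then obtain j where "j \<le> d" "(n - d) choose j = m"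
    by auto
  have "n choose d = (\<Sum>i\<le>d. (d choose i) * ((n - d) choose (d - i)))"
    using vandermonde[of d "n - d" d] assms by simp
  also have "\<dots> \<le> (\<Sum>i\<le>d. (d choose i) * m)"
    by (intro sum_mono mult_le_mono2) (auto simp: m_def)
  also have "\<dots> = 2 ^ d * m"
    by (simp add: sum_distrib_right[symmetric] choose_row_sum)
  finally show thesis
    using \<open>j \<le> d\<close> \<open>(n - d) choose j = m\<close> that by blast
qed

lemma exists_crossing_family:
  assumes "j \<le> d" and "2 * d \<le> n"
  obtains I :: "nat set set" and M S where "finite I" and "card I = (n - d) choose j"
    and "\<And>X. X \<in> I \<Longrightarrow> is_matching n d (M X)"
    and "\<And>X. X \<in> I \<Longrightarrow> S X \<subseteq> {1..n} \<and> card (S X) = d"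
    and "\<And>X Y. X \<in> I \<Longrightarrow> Y \<in> I \<Longrightarrow> fully_crosses (M X) (S Y) \<longleftrightarrow> X = Y"
proof -
  define B where "B = {d<..n}"
  define L where "L = {1..d - j}"
  define R where "R = {d - j<..d}"
  define I where "I = {X. X \<subseteq> B \<and> card X = j}"
  have "finite B" "card B = n - d"
    by (simp_all add: B_def)
  have LR: "L \<inter> R = {}" "L \<union> R = {1..d}" "(L \<union> R) \<inter> B = {}" "L \<union> B \<subseteq> {1..n}"
    using assms by (auto simp: L_def R_def B_def)
  have card_LR: "card L = d - j" "card R = j"
    using assms(1) by (simp_all add: L_def R_def)
  have I: "X \<subseteq> B" "finite X" "card X = j" if "X \<in> I" for X
    using that \<open>finite B\<close> finite_subset by (auto simp: I_def)
  have "\<exists>g. inj_on g (L \<union> R) \<and> g ` L \<subseteq> B - X \<and> g ` R = X" if "X \<in> I" for X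
  proof -
    have "card (B - X) = n - d - j"
      using I[OF that] \<open>card B = n - d\<close> by (simp add: card_Diff_subset)
    then have "card L \<le> card (B - X)"
      using assms card_LR by simp
    then show ?thesis
      using exists_pairing[OF \<open>finite B\<close> I(1)[OF that] LR(1)] I(3)[OF that] card_LR
      by (metis L_def R_def finite_atLeastAtMost finite_greaterThanAtMost)
  qed
  then obtain G where G: "\<And>X. X \<in> I \<Longrightarrow> inj_on (G X) (L \<union> R) \<and> G X ` L \<subseteq> B - X \<and> G X ` R = X"
    by metis
  show thesis
  proof (rule that[of I "\<lambda>X. pair_edges (G X) (L \<union> R)" "\<lambda>X. L \<union> X"])
    show "finite I"
      using \<open>finite B\<close> by (simp add: I_def)
    show "card I = (n - d) choose j"
      using n_subsets[OF \<open>finite B\<close>, of j] \<open>card B = n - d\<close> by (simp add: I_def)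
  next
    fix X assume X: "X \<in> I"
    have "G X ` (L \<union> R) \<subseteq> B"
      using G[OF X] I(1)[OF X] by auto
    then show "is_matching n d (pair_edges (G X) (L \<union> R))"
      using G[OF X] LR card_LR
      by (intro is_matching_pair_edges) (auto simp: B_def)
    have "L \<inter> X = {}"
      using LR(3) I(1)[OF X] by auto
    then have "card (L \<union> X) = d"
      using I[OF X] card_LR assms(1) by (simp add: card_Un_disjoint L_def)
    then show "L \<union> X \<subseteq> {1..n} \<and> card (L \<union> X) = d"
      using LR(4) I(1)[OF X] by auto
  next
    fix X Y assume "X \<in> I" "Y \<in> I"
    then show "fully_crosses (pair_edges (G X) (L \<union> R)) (L \<union> Y) \<longleftrightarrow> X = Y"
      using G[OF \<open>X \<in> I\<close>] LR(1,3) I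
      by (intro fully_crosses_pair_edges_eq_iff) auto
  qed
qed

theorem lemma2:
  fixes n d :: nat
  assumes "1 \<le> d" and "2 * d \<le> n"
  shows "\<exists>\<M> \<S>.
    (\<forall>M\<in>\<M>. is_matching n d M) \<and>
    (\<forall>S\<in>\<S>. S \<subseteq> {1..n} \<and> card S = d) \<and>
    real (card \<M>) \<ge> real (n choose d) / (4 * 2 ^ d) \<and>
    (\<forall>S\<in>\<S>. \<exists>!M. M \<in> \<M> \<and> fully_crosses M S) \<and>
    (\<forall>M\<in>\<M>. \<exists>S\<in>\<S>. fully_crosses M S) \<and>
    (\<forall>S\<in>\<S>. \<exists>!M. M \<in> \<M> \<and> qM M (indic S) \<noteq> 0) \<and>
    vector_space.dim fscale (module.span fscale (qM ` \<M>)) = card \<M>"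
proof -
  obtain j where "j \<le> d" and binomial_bound: "n choose d \<le> 2 ^ d * ((n - d) choose j)"
    using choose_le_two_pow_times_choose assms(2) by (metis le_add2 le_trans mult_2)
  obtain I :: "nat set set" and M S where "finite I" and card_I: "card I = (n - d) choose j"
    and matching: "\<And>X. X \<in> I \<Longrightarrow> is_matching n d (M X)"
    and sets: "\<And>X. X \<in> I \<Longrightarrow> S X \<subseteq> {1..n} \<and> card (S X) = d"
    and crosses: "\<And>X Y. X \<in> I \<Longrightarrow> Y \<in> I \<Longrightarrow> fully_crosses (M X) (S Y) \<longleftrightarrow> X = Y"
    using exists_crossing_family[OF \<open>j \<le> d\<close> assms(2)] by blast
  have qM_crosses: "qM (M X) (indic (S Y)) \<noteq> 0 \<longleftrightarrow> X = Y" if "X \<in> I" "Y \<in> I" for X Y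
    using qM_indic_neq_zero_iff[of "M X"] matching[OF that(1)] crosses[OF that]
    by (simp add: is_matching_def)
  have "card (M ` I) = card I"
    using crosses by (metis card_image inj_onI)
  moreover have "real (n choose d) / (4 * 2 ^ d) \<le> card I"
  proof -
    have "real (n choose d) \<le> 2 ^ d * card I"
      using binomial_bound card_I by (metis of_nat_le_iff of_nat_mult of_nat_numeral of_nat_power)
    also have "\<dots> \<le> 4 * (2 ^ d * card I)"
      by simp
    finally show ?thesis
      by (simp add: field_simps)
  qed
  moreover have "vector_space.dim fscale (module.span fscale (qM ` M ` I)) = card I"
    using dim_span_biorthogonal[of I "qM \<circ> M" "indic \<circ> S"] \<open>finite I\<close> qM_crosses
    by (simp add: image_comp)
  ultimately show ?thesis
    using matching sets crosses
      ex1_in_image_if_diagonal[of I fully_crosses M S]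
      ex1_in_image_if_diagonal[of I "\<lambda>M S. qM M (indic S) \<noteq> 0" M S] qM_crosses
    by (intro exI[of _ "M ` I"] exI[of _ "S ` I"] conjI) auto
qed

end
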